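(* For every $\rho$ with $\frac32<\rho<2$ there exists $a$ with $\frac12<a<1$ such that $${}_1F_2\left(a\,;\rho a,\,\rho a+\tfrac12\,;-\tfrac{x^2}{4}\right)>0\quad\text{for all } x>0.$$
   Context: For $a,b,c>0$, ${}_1F_2\left(a\,;b,c\,;-\frac{x^2}{4}\right)=\sum_{k=0}^\infty \frac{(a)_k}{k!\,(b)_k(c)_k}\left(-\frac{x^2}{4}\right)^k$, where $(\alpha)_k=\Gamma(\alpha+k)/\Gamma(\alpha)$. *)

theory Defs
  imports "HOL-Analysis.Analysis"
begin

definition hyp1F2 :: "real \<Rightarrow> real \<Rightarrow> real \<Rightarrow> real \<Rightarrow> real" where
  "hyp1F2 a b c z = (\<Sum>k. pochhammer a k / (fact k * pochhammer b k * pochhammer c k) * z ^ k)"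

end

theory Submission
  imports Defs
begin

text \<open>
  Since (a)_k / k! = B(a + k, 1 - a) / B(a, 1 - a), for 0 < a < 1 the function
  1F2(a; b, b + 1/2; z) is a Beta(a, 1 - a) average of 1F2(1; b, b + 1/2; z t) over t in [0, 1].
  By the duplication formula (2b)_2k = 4^k (b)_k (b + 1/2)_k and
  (2b)_2k / (3)_2k = B(3, 2b - 3) / B(3 + 2k, 2b - 3), the function 1F2(1; b, b + 1/2; z)
  is in turn, for b > 3/2, a Beta(3, 2b - 3) average of 1F2(1; 3/2, 2; z t^2), and
  1F2(1; 3/2, 2; -x^2/4) = 2 (1 - cos x) / x^2 is nonnegative and positive for small x.
  Hence 1F2(a; b, b + 1/2; z) > 0 for all z <= 0; for the theorem take b = rho a strictly
  between 3/2 and rho.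
\<close>

lemma pochhammer_mono:
  fixes a b :: real
  assumes "0 < a" "a \<le> b"
  shows "pochhammer a m \<le> pochhammer b m"
  by (induction m) (use assms in \<open>auto simp: pochhammer_Suc intro!: mult_mono pochhammer_nonneg\<close>)

lemma fact_le_pochhammer_mult:
  fixes b c :: real
  assumes "1 \<le> b" "1 \<le> c"
  shows "fact k \<le> pochhammer b k * pochhammer c k"
proof -
  have "fact k * 1 \<le> pochhammer b k * pochhammer c k"
  proof (rule mult_mono)
    show "fact k \<le> pochhammer b k"
      unfolding pochhammer_fact by (rule pochhammer_mono) (use assms in auto)
    have "(1::real) \<le> pochhammer 1 k" by (simp flip: pochhammer_fact)
    also have "\<dots> \<le> pochhammer c k" by (rule pochhammer_mono) (use assms in auto)
    finally show "1 \<le> pochhammer c k" .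
  qed (use assms in \<open>auto simp: pochhammer_nonneg\<close>)
  then show ?thesis by simp
qed

lemma summable_abs_power_div:
  fixes w :: real
  assumes "\<And>k. fact k \<le> d k"
  shows "summable (\<lambda>k. \<bar>w ^ k / d k\<bar>)"
proof (rule summable_comparison_test'[OF summable_exp[of "\<bar>w\<bar>"]])
  fix k
  have "0 < d k"
    using assms[of k] fact_gt_zero by (rule order.strict_trans2[rotated])
  then have "\<bar>w\<bar> ^ k / d k \<le> \<bar>w\<bar> ^ k / fact k"
    using assms[of k] by (intro divide_left_mono) auto
  then show "norm \<bar>w ^ k / d k\<bar> \<le> inverse (fact k) * \<bar>w\<bar> ^ k"
    using \<open>0 < d k\<close> by (simp add: abs_divide power_abs divide_inverse mult.commute abs_mult)
qed

lemma Beta_real_pos: "0 < p \<Longrightarrow> 0 < q \<Longrightarrow> 0 < Beta p q" for p q :: real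
  by (simp add: Beta_def Gamma_real_pos)

lemma Beta_plus_of_nat:
  fixes p q :: real
  assumes "0 < p" "0 < q"
  shows "Beta (p + real m) q = Beta p q * pochhammer p m / pochhammer (p + q) m"
proof -
  have "p \<notin> \<int>\<^sub>\<le>\<^sub>0" "p + q \<notin> \<int>\<^sub>\<le>\<^sub>0"
    using assms by (auto dest: nonpos_Ints_nonpos)
  moreover have "Gamma p > 0" "Gamma (p + q) > 0" "Gamma (p + q + real m) > 0"
    using assms by (auto intro!: Gamma_real_pos add_pos_nonneg)
  ultimately show ?thesis
    by (simp add: Beta_def pochhammer_Gamma field_simps)
qed

lemma lborel_integral_Beta:
  fixes p q :: real
  assumes "0 < p" "0 < q"
  shows "integrable lborel (\<lambda>t. indicator {0..1} t * (t powr (p - 1) * (1 - t) powr (q - 1)))"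
    and "(\<integral>t. indicator {0..1} t * (t powr (p - 1) * (1 - t) powr (q - 1)) \<partial>lborel) = Beta p q"
proof -
  have si: "set_integrable lborel {0..1} (\<lambda>t. t powr (p - 1) * (1 - t) powr (q - 1))"
    using integrable_Beta[OF assms] .
  then show "integrable lborel (\<lambda>t. indicator {0..1} t * (t powr (p - 1) * (1 - t) powr (q - 1)))"
    by (simp add: set_integrable_def)
  have "(LINT t:{0..1}|lborel. t powr (p - 1) * (1 - t) powr (q - 1)) = Beta p q"
    using set_borel_integral_eq_integral(2)[OF si] has_integral_Beta_real[OF assms]
    by (simp add: integral_unique)
  then show "(\<integral>t. indicator {0..1} t * (t powr (p - 1) * (1 - t) powr (q - 1)) \<partial>lborel) = Beta p q"
    by (simp add: set_lebesgue_integral_def)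
qed

lemma integral_pos_of_pos_on_interval:
  fixes g :: "real \<Rightarrow> real"
  assumes g: "integrable lborel g" and nonneg: "\<And>t. 0 \<le> g t"
    and "l < u" and pos: "\<And>t. l < t \<Longrightarrow> t < u \<Longrightarrow> 0 < g t"
  shows "0 < integral\<^sup>L lborel g"
proof -
  have "integral\<^sup>L lborel g \<noteq> 0"
  proof
    assume "integral\<^sup>L lborel g = 0"
    then have "AE t in lborel. g t = 0"
      using integral_nonneg_eq_0_iff_AE[OF g] nonneg by auto
    then obtain N where N: "{t \<in> space lborel. g t \<noteq> 0} \<subseteq> N" "emeasure lborel N = 0" "N \<in> sets lborel"
      by (rule AE_E)
    have "{l<..<u} \<subseteq> N"
      using N(1) pos by force
    then have "emeasure lborel {l<..<u} \<le> emeasure lborel N"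
      using N(3) by (intro emeasure_mono)
    then show False
      using N(2) \<open>l < u\<close> by simp
  qed
  moreover have "0 \<le> integral\<^sup>L lborel g"
    using nonneg by (simp add: integral_nonneg)
  ultimately show ?thesis
    by simp
qed

lemma Beta_kernel_shift:
  fixes t p q :: real
  shows "indicator {0..1} t * (t powr (p + real m - 1) * (1 - t) powr (q - 1))
    = indicator {0..1} t * (t powr (p - 1) * (1 - t) powr (q - 1)) * t ^ m"
proof (cases "0 < t \<and> t \<le> 1")
  case True
  then have "t powr (p + real m - 1) = t ^ m * t powr (p - 1)"
    by (simp add: powr_add [symmetric] powr_realpow [symmetric] algebra_simps)
  then show ?thesis
    by simp
qed (cases "t = 0", auto)

lemma Beta_series_integral:
  fixes c :: "nat \<Rightarrow> real" and p q :: real and n :: nat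
  assumes p: "0 < p" and q: "0 < q" and c: "summable (\<lambda>k. \<bar>c k\<bar>)"
  defines "w \<equiv> \<lambda>t. indicator {0..1} t * (t powr (p - 1) * (1 - t) powr (q - 1))"
  shows "integrable lborel (\<lambda>t. w t * (\<Sum>k. c k * t ^ (n * k)))"
    and "(\<lambda>k. c k * Beta (p + real (n * k)) q) sums (\<integral>t. w t * (\<Sum>k. c k * t ^ (n * k)) \<partial>lborel)"
proof -
  define f where
    "f = (\<lambda>k t. c k * (indicator {0..1} t * (t powr (p + real (n * k) - 1) * (1 - t) powr (q - 1))))"
  have p_k: "0 < p + real (n * k)" for k
    using p by (simp add: add_pos_nonneg del: of_nat_mult)
  have w_nonneg: "0 \<le> w t" for t
    by (simp add: w_def)
  have f_eq: "f k t = w t * (c k * t ^ (n * k))" for k t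
    using Beta_kernel_shift[of t p "n * k" q] by (simp add: f_def w_def mult_ac del: of_nat_mult)
  have int_f: "integrable lborel (f k)" for k
    using lborel_integral_Beta(1)[OF p_k q] by (simp add: f_def del: of_nat_mult)
  have integral_f: "integral\<^sup>L lborel (f k) = c k * Beta (p + real (n * k)) q" for k
    using lborel_integral_Beta(2)[OF p_k q] by (simp add: f_def del: of_nat_mult)
  have norm_f: "norm (f k t) \<le> \<bar>c k\<bar> * w t" for k t
  proof (cases "t \<in> {0..1}")
    case True
    then have "\<bar>c k\<bar> * \<bar>t\<bar> ^ (n * k) \<le> \<bar>c k\<bar>"
      by (intro mult_left_le power_le_one) auto
    from mult_right_mono[OF this w_nonneg[of t]] show ?thesis
      by (simp add: f_eq abs_mult power_abs w_nonneg mult_ac)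
  qed (simp add: f_eq w_def)
  have summable_AE: "AE t in lborel. summable (\<lambda>k. norm (f k t))"
    using norm_f by (intro AE_I2 summable_comparison_test'[OF summable_mult2[OF c]]) auto
  have summable_integrals: "summable (\<lambda>k. \<integral>t. norm (f k t) \<partial>lborel)"
  proof (rule summable_comparison_test'[OF summable_mult2[OF c, of "Beta p q"]])
    fix k
    have "(\<integral>t. norm (f k t) \<partial>lborel) = \<bar>c k\<bar> * Beta (p + real (n * k)) q"
      using lborel_integral_Beta(2)[OF p_k q] by (simp add: f_def abs_mult del: of_nat_mult)
    moreover have "Beta (p + real (n * k)) q \<le> Beta p q"
      by (rule Beta_real_mono) (use p q in auto)
    ultimately show "norm (\<integral>t. norm (f k t) \<partial>lborel) \<le> \<bar>c k\<bar> * Beta p q"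
      using Beta_real_pos[OF p_k[of k] q] by (simp add: abs_mult mult_left_mono del: of_nat_mult)
  qed
  have suminf_f: "(\<Sum>k. f k t) = w t * (\<Sum>k. c k * t ^ (n * k))" for t
  proof (cases "t \<in> {0..1}")
    case True
    have "summable (\<lambda>k. c k * t ^ (n * k))"
      using True by (intro summable_comparison_test'[OF c])
        (auto simp: abs_mult power_abs power_le_one mult_left_le)
    then show ?thesis
      unfolding f_eq by (rule suminf_mult)
  qed (simp add: f_eq w_def)
  show "integrable lborel (\<lambda>t. w t * (\<Sum>k. c k * t ^ (n * k)))"
    using integrable_suminf[OF int_f summable_AE summable_integrals] by (simp add: suminf_f)
  show "(\<lambda>k. c k * Beta (p + real (n * k)) q) sums (\<integral>t. w t * (\<Sum>k. c k * t ^ (n * k)) \<partial>lborel)"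
    using sums_integral[OF int_f summable_AE summable_integrals] by (simp add: suminf_f integral_f)
qed

lemma Beta_series_pos:
  fixes c :: "nat \<Rightarrow> real" and p q \<epsilon> :: real and n :: nat
  assumes p: "0 < p" and q: "0 < q" and c: "summable (\<lambda>k. \<bar>c k\<bar>)"
    and nonneg: "\<And>t. 0 \<le> t \<Longrightarrow> t \<le> 1 \<Longrightarrow> 0 \<le> (\<Sum>k. c k * t ^ (n * k))"
    and "0 < \<epsilon>" and pos: "\<And>t. 0 < t \<Longrightarrow> t < \<epsilon> \<Longrightarrow> 0 < (\<Sum>k. c k * t ^ (n * k))"
  shows "summable (\<lambda>k. c k * Beta (p + real (n * k)) q)"
    and "0 < (\<Sum>k. c k * Beta (p + real (n * k)) q)"
proof -
  define g where
    "g = (\<lambda>t. indicator {0..1} t * (t powr (p - 1) * (1 - t) powr (q - 1)) * (\<Sum>k. c k * t ^ (n * k)))"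
  have sums: "(\<lambda>k. c k * Beta (p + real (n * k)) q) sums integral\<^sup>L lborel g"
    using Beta_series_integral(2)[OF p q c] unfolding g_def .
  then show "summable (\<lambda>k. c k * Beta (p + real (n * k)) q)"
    by (rule sums_summable)
  have "0 < integral\<^sup>L lborel g"
  proof (rule integral_pos_of_pos_on_interval)
    show "integrable lborel g"
      using Beta_series_integral(1)[OF p q c] unfolding g_def .
    show "0 \<le> g t" for t
      using nonneg[of t] by (simp add: g_def indicator_def)
    show "0 < g t" if "0 < t" "t < min \<epsilon> 1" for t
      using pos[of t] that by (simp add: g_def)
  qed (use \<open>0 < \<epsilon>\<close> in simp)
  with sums show "0 < (\<Sum>k. c k * Beta (p + real (n * k)) q)"
    by (simp add: sums_iff)
qed

lemma suminf_pos_if_cmult_pos: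
  fixes T :: "nat \<Rightarrow> real"
  assumes "0 < B" and "summable (\<lambda>k. B * T k)" and "0 < (\<Sum>k. B * T k)"
  shows "0 < suminf T"
proof -
  have "summable T"
    using assms(1,2) by (simp add: summable_cmult_iff)
  with assms(1,3) show ?thesis
    by (simp add: suminf_mult zero_less_mult_iff)
qed

lemma hyp1F2_zero [simp]: "hyp1F2 a b c 0 = 1"
  using powser_zero[of "\<lambda>k. pochhammer a k / (fact k * pochhammer b k * pochhammer c k)"]
  by (simp add: hyp1F2_def)

lemma hyp1F2_one_left: "hyp1F2 1 b c z = (\<Sum>k. z ^ k / (pochhammer b k * pochhammer c k))"
  by (simp add: hyp1F2_def flip: pochhammer_fact)

lemma fact_double_Suc_pochhammer:
  "fact (2 * Suc k) = (2 :: real) * 4 ^ k * pochhammer (3/2) k * pochhammer 2 k"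
proof -
  have "fact (2 * Suc k) = pochhammer (1::real) 2 * pochhammer 3 (2 * k)"
    using pochhammer_product'[of "1::real" 2 "2 * k"] by (simp add: pochhammer_fact)
  moreover have "pochhammer (1::real) 2 = 2"
    by (simp add: numeral_2_eq_2 pochhammer_Suc)
  ultimately show ?thesis
    using pochhammer_double[of "3/2::real" k] by (simp add: power_mult)
qed

lemma hyp1F2_one_three_halves_two:
  fixes z :: real
  assumes "z \<noteq> 0"
  shows "hyp1F2 1 (3/2) 2 (- (z^2) / 4) = 2 * (1 - cos z) / z^2"
proof -
  have summand: "(- (z^2) / 4) ^ k / (pochhammer (3/2) k * pochhammer 2 k)
      = - 2 / z^2 * ((- 1) ^ Suc k / fact (2 * Suc k) * z ^ (2 * Suc k))" for k
  proof -
    have "z ^ (2 * Suc k) = z^2 * (z^2) ^ k"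
      by (simp only: power_mult power_Suc)
    moreover have "(- (z^2) / 4) ^ k = (- 1) ^ k * (z^2) ^ k / 4 ^ k"
      by (simp add: power_divide power_minus')
    ultimately show ?thesis
      unfolding fact_double_Suc_pochhammer
      using assms pochhammer_pos[of "3/2::real" k] pochhammer_pos[of "2::real" k]
      by (simp add: field_simps)
  qed
  have "(\<lambda>k. (- 1) ^ Suc k / fact (2 * Suc k) * z ^ (2 * Suc k)) sums (cos z - 1)"
    using cos_paired[of z] by (subst sums_Suc_iff) simp
  from sums_mult[OF this, of "- 2 / z^2"] show ?thesis
    unfolding hyp1F2_one_left summand using assms by (simp add: sums_iff field_simps)
qed

lemma hyp1F2_one_three_halves_two_negE:
  fixes w :: real
  assumes "w < 0"
  obtains z where "0 < z" "z^2 = 4 * - w" "hyp1F2 1 (3/2) 2 w = 2 * (1 - cos z) / z^2"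
proof
  let ?z = "2 * sqrt (- w)"
  show "0 < ?z" "?z^2 = 4 * - w"
    using assms by (simp_all add: power_mult_distrib)
  then show "hyp1F2 1 (3/2) 2 w = 2 * (1 - cos ?z) / ?z^2"
    using hyp1F2_one_three_halves_two[of ?z] by simp
qed

lemma hyp1F2_one_three_halves_two_nonneg:
  fixes w :: real
  assumes "w \<le> 0"
  shows "0 \<le> hyp1F2 1 (3/2) 2 w"
proof (cases "w = 0")
  case False
  with assms have "w < 0"
    by simp
  then obtain z where "hyp1F2 1 (3/2) 2 w = 2 * (1 - cos z) / z^2"
    by (rule hyp1F2_one_three_halves_two_negE)
  then show ?thesis
    by simp
qed simp

lemma hyp1F2_one_three_halves_two_pos:
  fixes w :: real
  assumes "- 1 < w" "w \<le> 0"
  shows "0 < hyp1F2 1 (3/2) 2 w"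
proof (cases "w = 0")
  case False
  with assms have "w < 0"
    by simp
  then obtain z where z: "0 < z" "z^2 = 4 * - w" "hyp1F2 1 (3/2) 2 w = 2 * (1 - cos z) / z^2"
    by (rule hyp1F2_one_three_halves_two_negE)
  have "z^2 < 2^2"
    using z(2) assms by simp
  then have "z < pi"
    using pi_gt3 z(1) power_less_imp_less_base[of z 2 2] by linarith
  then have "cos z < cos 0"
    using z(1) by (intro cos_monotone_0_pi) auto
  then show ?thesis
    using z(1,3) by simp
qed simp

lemma Beta_three_plus_double:
  fixes b :: real
  assumes "3/2 < b"
  shows "Beta (3 + real (2 * k)) (2 * b - 3) * pochhammer b k * pochhammer (b + 1/2) k
    = Beta 3 (2 * b - 3) * pochhammer (3/2) k * pochhammer 2 k"
proof -
  have "pochhammer (3::real) (2 * k) = 4 ^ k * pochhammer (3/2) k * pochhammer 2 k"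
    using pochhammer_double[of "3/2::real" k] by (simp add: power_mult)
  moreover have "pochhammer (2 * b) (2 * k) = 4 ^ k * pochhammer b k * pochhammer (b + 1/2) k"
    using pochhammer_double[of b k] by (simp add: power_mult)
  moreover have "0 < pochhammer b k" "0 < pochhammer (b + 1/2) k"
    using assms by (simp_all add: pochhammer_pos)
  ultimately show ?thesis
    using Beta_plus_of_nat[of 3 "2 * b - 3" "2 * k"] assms by (simp add: field_simps)
qed

lemma hyp1F2_one_pos:
  fixes b w :: real
  assumes b: "3/2 < b" and w: "w \<le> 0"
  shows "0 < hyp1F2 1 b (b + 1/2) w"
proof -
  define c where "c k = w ^ k / (pochhammer (3/2) k * pochhammer 2 k)" for k
  define B where "B = Beta 3 (2 * b - 3)"
  have q: "0 < 2 * b - 3"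
    using b by simp
  have c: "summable (\<lambda>k. \<bar>c k\<bar>)"
    unfolding c_def by (rule summable_abs_power_div) (simp add: fact_le_pochhammer_mult)
  have inner: "(\<Sum>k. c k * t ^ (2 * k)) = hyp1F2 1 (3/2) 2 (w * t^2)" for t
    by (simp add: hyp1F2_one_left c_def power_mult power_mult_distrib)
  have Beta_c: "c k * Beta (3 + real (2 * k)) (2 * b - 3)
      = B * (w ^ k / (pochhammer b k * pochhammer (b + 1/2) k))" for k
    using Beta_three_plus_double[OF b, of k] pochhammer_pos[of "3/2::real" k] pochhammer_pos[of "2::real" k]
      pochhammer_pos[of b k] pochhammer_pos[of "b + 1/2" k] b
    by (simp add: B_def c_def field_simps)
  have nonneg: "0 \<le> (\<Sum>k. c k * t ^ (2 * k))" for t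
    unfolding inner using w by (intro hyp1F2_one_three_halves_two_nonneg) (simp add: mult_nonpos_nonneg)
  have pos: "0 < (\<Sum>k. c k * t ^ (2 * k))" if "0 < t" "t < 1 / (1 - w)" for t
  proof -
    have tw: "0 \<le> t * - w"
      using that w by (simp add: mult_nonneg_nonpos)
    have t1w: "t * (1 - w) < 1"
      using that w by (simp add: field_simps)
    then have "t < 1"
      using tw by (simp add: algebra_simps)
    have "- w * t^2 = t * - w * t"
      by (simp add: power2_eq_square)
    also have "\<dots> \<le> t * - w"
      using \<open>t < 1\<close> by (intro mult_left_le[OF _ tw]) simp
    also have "\<dots> < 1"
      using t1w \<open>0 < t\<close> by (simp add: algebra_simps)
    finally have "- w * t^2 < 1" .
    then show ?thesis
      unfolding inner using w by (intro hyp1F2_one_three_halves_two_pos) (auto simp: mult_nonpos_nonneg)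
  qed
  have "0 < (3::real)" "0 < 1 / (1 - w)"
    using w by simp_all
  note Beta_series = Beta_series_pos[OF this(1) q c nonneg this(2) pos]
  have "0 < B"
    unfolding B_def using q by (simp add: Beta_real_pos)
  from suminf_pos_if_cmult_pos[OF this Beta_series[unfolded Beta_c]] show ?thesis
    unfolding hyp1F2_one_left .
qed

lemma hyp1F2_pos:
  fixes a b z :: real
  assumes a: "0 < a" "a < 1" and b: "3/2 < b" and z: "z \<le> 0"
  shows "0 < hyp1F2 a b (b + 1/2) z"
proof -
  define c where "c k = z ^ k / (pochhammer b k * pochhammer (b + 1/2) k)" for k
  define B where "B = Beta a (1 - a)"
  have q: "0 < 1 - a"
    using a by simp
  have c: "summable (\<lambda>k. \<bar>c k\<bar>)"
    unfolding c_def by (rule summable_abs_power_div) (use b in \<open>simp add: fact_le_pochhammer_mult\<close>)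
  have pos: "0 < (\<Sum>k. c k * t ^ (1 * k))" if "0 \<le> t" for t
    using hyp1F2_one_pos[OF b, of "z * t"] that z
    by (simp add: hyp1F2_one_left c_def power_mult_distrib mult_nonpos_nonneg)
  have Beta_c: "c k * Beta (a + real (1 * k)) (1 - a)
      = B * (pochhammer a k / (fact k * pochhammer b k * pochhammer (b + 1/2) k) * z ^ k)" for k
    using Beta_plus_of_nat[OF a(1) q, of k] by (simp add: B_def c_def pochhammer_fact mult_ac)
  have "0 < B"
    unfolding B_def using a q by (simp add: Beta_real_pos)
  moreover note Beta_series_pos[OF a(1) q c less_imp_le[OF pos] zero_less_one pos[OF less_imp_le]]
  ultimately show ?thesis
    unfolding hyp1F2_def Beta_c by (rule suminf_pos_if_cmult_pos)
qed

theorem corollary1: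
  fixes \<rho> :: real
  assumes "3/2 < \<rho>" and "\<rho> < 2"
  shows "\<exists>a::real. 1/2 < a \<and> a < 1 \<and>
           (\<forall>x::real. x > 0 \<longrightarrow> hyp1F2 a (\<rho> * a) (\<rho> * a + 1/2) (- (x^2) / 4) > 0)"
proof -
  define b where "b = (3/2 + \<rho>) / 2"
  define a where "a = b / \<rho>"
  have "3/2 < b" "b < \<rho>"
    using assms by (simp_all add: b_def)
  then have "1/2 < a" "a < 1" "\<rho> * a = b"
    using assms by (simp_all add: a_def field_simps)
  moreover have "0 < hyp1F2 a b (b + 1/2) (- (x^2) / 4)" for x
    using \<open>3/2 < b\<close> calculation by (intro hyp1F2_pos) auto
  ultimately show ?thesis
    by auto
qed

end
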